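(* Let $\sigma>0$, $\mu_0\in\mathbb{R}^P$, $Y=\mu_0+W$ with $W\sim\mathcal N(0,\sigma^2\mathrm{Id}_P)$, $\lambda>0$ and $0<\epsilon<2\lambda$. Let $\mathrm{ST}$ be the soft-thresholding, $\mathrm{ST}(y,\lambda)_i=y_i+\lambda$ if $y_i\le-\lambda$, $0$ if $-\lambda<y_i<\lambda$, $y_i-\lambda$ otherwise, and let $$\widehat{\mathrm{df}}^{\mathrm{FD}}(y,\lambda,\epsilon)=\frac1\epsilon\sum_{i=1}^P\big(\mathrm{ST}(y+\epsilon e_i,\lambda)-\mathrm{ST}(y,\lambda)\big)_i.$$ Then the weak gradient $\nabla_2\widehat{\mathrm{df}}^{\mathrm{FD}}(y,\lambda,\epsilon)$ of $\lambda\mapsto\widehat{\mathrm{df}}^{\mathrm{FD}}(y,\lambda,\epsilon)$ satisfies $$\mathbb{E}_W\big[\nabla_2\widehat{\mathrm{df}}^{\mathrm{FD}}(Y,\lambda,\epsilon)\big]=-\frac12\sum_{i=1}^P\frac{\varphi[(\mu_0)_i,\lambda,\epsilon]}{\epsilon},$$ $$\mathbb{V}_W\big[\nabla_2\widehat{\mathrm{df}}^{\mathrm{FD}}(Y,\lambda,\epsilon)\big]=\frac1{2\epsilon}\sum_{i=1}^P\frac{\varphi[(\mu_0)_i,\lambda,\epsilon]}{\epsilon}-\frac14\sum_{i=1}^P\Big[\frac{\varphi[(\mu_0)_i,\lambda,\epsilon]}{\epsilon}\Big]^2,$$ where for $a\in\mathbb{R}$, $$\varphi[a,\lambda,\ep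silon]=\operatorname{erf}\!\Big(\tfrac{a+\lambda+\epsilon}{\sqrt2\sigma}\Big)-\operatorname{erf}\!\Big(\tfrac{a+\lambda}{\sqrt2\sigma}\Big)+\operatorname{erf}\!\Big(\tfrac{a-\lambda+\epsilon}{\sqrt2\sigma}\Big)-\operatorname{erf}\!\Big(\tfrac{a-\lambda}{\sqrt2\sigma}\Big).$$
   Context: $(e_i)$ is the canonical basis of $\mathbb{R}^P$; $\mathbb{E}_W$ and $\mathbb{V}_W$ denote expectation and variance with respect to $W$. The weak derivative of $\mathrm{ST}$ with respect to $\lambda$ is $\partial_\lambda\mathrm{ST}(y,\lambda)_i=0$ if $|y_i|\le\lambda$ and $-\operatorname{sign}(y_i)$ otherwise, so that $\nabla_2\widehat{\mathrm{df}}^{\mathrm{FD}}(y,\lambda,\epsilon)=\frac1\epsilon\sum_i\big(\partial_\lambda\mathrm{ST}(y+\epsilon e_i,\lambda)_i-\partial_\lambda\mathrm{ST}(y,\lambda)_i\big)$. *)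

theory Defs
  imports "HOL-Probability.Probability"
begin

definition erf :: "real \<Rightarrow> real" where
  "erf x = 2 / sqrt pi * (LBINT t=0..x. exp (- (t\<^sup>2)))"

text \<open>Vectors of R^P are functions nat => real, only coordinates i < P matter.\<close>
definition basis_vec :: "nat \<Rightarrow> nat \<Rightarrow> real" where
  "basis_vec i = (\<lambda>j. if j = i then 1 else 0)"

definition ST :: "(nat \<Rightarrow> real) \<Rightarrow> real \<Rightarrow> nat \<Rightarrow> real" where
  "ST y lam i = (if y i \<le> - lam then y i + lam else if y i < lam then 0 else y i - lam)"

definition df_FD :: "nat \<Rightarrow> (nat \<Rightarrow> real) \<Rightarrow> real \<Rightarrow> real \<Rightarrow> real" where
  "df_FD P y lam eps =
     (1 / eps) * (\<Sum>i<P. ST (\<lambda>j. y j + eps * basis_vec i j) lam i - ST y lam i)"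

text \<open>Weak derivative of ST with respect to lambda (as fixed in the paper).\<close>
definition dST_lam :: "(nat \<Rightarrow> real) \<Rightarrow> real \<Rightarrow> nat \<Rightarrow> real" where
  "dST_lam y lam i = (if \<bar>y i\<bar> \<le> lam then 0 else - sgn (y i))"

definition grad2_df_FD :: "nat \<Rightarrow> (nat \<Rightarrow> real) \<Rightarrow> real \<Rightarrow> real \<Rightarrow> real" where
  "grad2_df_FD P y lam eps =
     (1 / eps) * (\<Sum>i<P. dST_lam (\<lambda>j. y j + eps * basis_vec i j) lam i - dST_lam y lam i)"

definition phi_fd :: "real \<Rightarrow> real \<Rightarrow> real \<Rightarrow> real \<Rightarrow> real" where
  "phi_fd \<sigma> a lam eps =
     erf ((a + lam + eps) / (sqrt 2 * \<sigma>)) - erf ((a + lam) / (sqrt 2 * \<sigma>))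
   + erf ((a - lam + eps) / (sqrt 2 * \<sigma>)) - erf ((a - lam) / (sqrt 2 * \<sigma>))"

definition gauss_noise :: "nat \<Rightarrow> real \<Rightarrow> (nat \<Rightarrow> real) measure" where
  "gauss_noise P \<sigma> = PiM {..<P} (\<lambda>_. density lborel (normal_density 0 \<sigma>))"

end

theory Submission
  imports Defs
begin

text \<open>
  For \<open>0 < \<epsilon> < 2\<lambda>\<close>, the \<open>i\<close>-th term of the finite difference of the weak derivative of
  soft-thresholding is \<open>-1\<close> when \<open>y\<^sub>i\<close> lies in the window \<open>[-\<lambda>-\<epsilon>, -\<lambda>) \<union> (\<lambda>-\<epsilon>, \<lambda>]\<close> and \<open>0\<close>
  otherwise. Hence \<open>\<nabla>\<^sub>2 df\<^sup>F\<^sup>D(Y)\<close> is \<open>-1/\<epsilon>\<close> times a sum of \<open>P\<close> independent Bernoulli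
  variables. Since \<open>erf (x / (\<surd>2 \<sigma>)) / 2\<close> is an antiderivative of the \<open>N(0, \<sigma>\<^sup>2)\<close> density and
  \<open>erf\<close> is odd, the \<open>i\<close>-th window has probability \<open>\<phi>[(\<mu>\<^sub>0)\<^sub>i, \<lambda>, \<epsilon>] / 2\<close>; the mean \<open>p\<close> and
  variance \<open>p - p\<^sup>2\<close> of a Bernoulli variable then give both formulas.
\<close>

lemma integrable_PiM_component:
  fixes h :: "'a \<Rightarrow> real"
  assumes "\<And>i. i \<in> I \<Longrightarrow> prob_space (M i)" "k \<in> I" "integrable (M k) h"
  shows "integrable (PiM I M) (\<lambda>w. h (w k))"
proof -
  have "integrable (distr (PiM I M) (M k) (\<lambda>w. w k)) h"
    using assms by (simp add: distr_PiM_component)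
  then show ?thesis
    using assms by (subst (asm) integrable_distr_eq) (auto intro: measurable_component_singleton)
qed

lemma integral_PiM_component:
  fixes h :: "'a \<Rightarrow> real"
  assumes "\<And>i. i \<in> I \<Longrightarrow> prob_space (M i)" "k \<in> I" "h \<in> borel_measurable (M k)"
  shows "(\<integral>w. h (w k) \<partial>PiM I M) = integral\<^sup>L (M k) h"
proof -
  have "integral\<^sup>L (distr (PiM I M) (M k) (\<lambda>w. w k)) h = (\<integral>w. h (w k) \<partial>PiM I M)"
    using assms by (intro integral_distr measurable_component_singleton) simp_all
  then show ?thesis
    using assms by (simp add: distr_PiM_component)
qed

lemma integral_PiM_two_components:
  fixes h1 h2 :: "'a \<Rightarrow> real"
  assumes M: "\<And>i. prob_space (M i)" and "finite I" "k \<in> I" "l \<in> I" "k \<noteq> l"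
    and "integrable (M k) h1" "integrable (M l) h2"
  shows "(\<integral>w. h1 (w k) * h2 (w l) \<partial>PiM I M) = integral\<^sup>L (M k) h1 * integral\<^sup>L (M l) h2"
proof -
  interpret product_prob_space M I
    using M by (rule product_prob_spaceI)
  define f where "f j x = (if j = k then h1 x else if j = l then h2 x else 1)" for j x
  have prod_split: "(\<Prod>j\<in>I. u j) = u k * u l * (\<Prod>j\<in>I - {k, l}. u j :: real)" for u
  proof -
    have "(\<Prod>j\<in>I. u j) = u k * (\<Prod>j\<in>I - {k}. u j)"
      using assms by (simp add: prod.remove)
    also have "(\<Prod>j\<in>I - {k}. u j) = u l * (\<Prod>j\<in>I - {k} - {l}. u j)"
      using assms by (subst prod.remove[of _ l]) auto
    finally show ?thesis by (simp add: Diff_insert2[symmetric] mult.assoc insert_commute)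
  qed
  have "(\<integral>w. (\<Prod>j\<in>I. f j (w j)) \<partial>PiM I M) = (\<Prod>j\<in>I. integral\<^sup>L (M j) (f j))"
  proof (rule product_integral_prod)
    show "integrable (M j) (f j)" for j
      using assms by (cases "j = k"; cases "j = l") (simp_all add: f_def[abs_def])
  qed fact
  moreover have "(\<Prod>j\<in>I - {k, l}. f j (w j)) = 1" for w
    by (auto simp: f_def intro!: prod.neutral)
  moreover have "(\<Prod>j\<in>I - {k, l}. integral\<^sup>L (M j) (f j)) = 1"
    by (intro prod.neutral) (simp add: f_def[abs_def] M.prob_space)
  ultimately show ?thesis
    using assms by (simp add: prod_split f_def[abs_def])
qed

lemma
  fixes g :: "'i \<Rightarrow> 'a \<Rightarrow> real"
  assumes M: "\<And>i. prob_space (M i)" and I: "finite I"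
    and g_meas: "\<And>i. i \<in> I \<Longrightarrow> g i \<in> borel_measurable (M i)"
    and g_bound: "\<And>i x. i \<in> I \<Longrightarrow> \<bar>g i x\<bar> \<le> B"
  defines "m i \<equiv> integral\<^sup>L (M i) (g i)"
  shows integral_PiM_sum_components: "(\<integral>w. (\<Sum>i\<in>I. g i (w i)) \<partial>PiM I M) = (\<Sum>i\<in>I. m i)"
    and variance_PiM_sum_components:
      "(\<integral>w. ((\<Sum>i\<in>I. g i (w i)) - (\<Sum>i\<in>I. m i))\<^sup>2 \<partial>PiM I M)
        = (\<Sum>i\<in>I. \<integral>x. (g i x - m i)\<^sup>2 \<partial>M i)"
proof -
  interpret product_prob_space M I
    using M by (rule product_prob_spaceI)
  define c where "c i x = g i x - m i" for i x
  have c_bound: "\<bar>c i x\<bar> \<le> B + \<bar>m i\<bar>" if "i \<in> I" for i x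
    using g_bound[OF that, of x] by (simp add: c_def)
  have c_meas[measurable]: "c i \<in> borel_measurable (M i)" if "i \<in> I" for i
    using g_meas[OF that] by (simp add: c_def[abs_def])
  have g_int: "integrable (M i) (g i)" if "i \<in> I" for i
    using g_meas[OF that] g_bound[OF that]
    by (intro M.integrable_const_bound[where B=B]) auto
  have c_centered: "(\<integral>x. c i x \<partial>M i) = 0" if "i \<in> I" for i
    using g_int[OF that] by (simp add: c_def[abs_def] m_def M.prob_space)
  show "(\<integral>w. (\<Sum>i\<in>I. g i (w i)) \<partial>PiM I M) = (\<Sum>i\<in>I. m i)"
    using M g_int g_meas by (simp add: integral_sum integrable_PiM_component integral_PiM_component m_def)
  have cross: "(\<integral>w. c i (w i) * c j (w j) \<partial>PiM I M) = (if i = j then \<integral>x. (c i x)\<^sup>2 \<partial>M i else 0)"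
    if "i \<in> I" "j \<in> I" for i j
  proof (cases "i = j")
    case True
    have "(\<integral>w. (c i (w i))\<^sup>2 \<partial>PiM I M) = (\<integral>x. (c i x)\<^sup>2 \<partial>M i)"
      by (intro integral_PiM_component M that) (use that in measurable)
    then show ?thesis
      using True by (simp add: power2_eq_square)
  next
    case False
    have "integrable (M k) (c k)" if "k \<in> I" for k
      using g_int[OF that] by (simp add: c_def[abs_def] M.prob_space)
    then show ?thesis
      using that False M I by (simp add: integral_PiM_two_components c_centered)
  qed
  have cross_int: "integrable (PiM I M) (\<lambda>w. c i (w i) * c j (w j))" if "i \<in> I" "j \<in> I" for i j
    by (rule P.integrable_const_bound[where B="(B + \<bar>m i\<bar>) * (B + \<bar>m j\<bar>)"])
      (use that in \<open>auto simp: abs_mult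
        intro!: AE_I2 mult_mono c_bound order_trans[OF abs_ge_zero c_bound]\<close>)
  have "(\<Sum>i\<in>I. g i (w i)) - (\<Sum>i\<in>I. m i) = (\<Sum>i\<in>I. c i (w i))" for w
    by (simp add: c_def sum_subtractf)
  then have "(\<integral>w. ((\<Sum>i\<in>I. g i (w i)) - (\<Sum>i\<in>I. m i))\<^sup>2 \<partial>PiM I M)
      = (\<integral>w. (\<Sum>i\<in>I. \<Sum>j\<in>I. c i (w i) * c j (w j)) \<partial>PiM I M)"
    by (simp add: power2_eq_square sum_product)
  also have "\<dots> = (\<Sum>i\<in>I. \<Sum>j\<in>I. \<integral>w. c i (w i) * c j (w j) \<partial>PiM I M)"
    using cross_int by (simp add: integral_sum integrable_sum)
  also have "\<dots> = (\<Sum>i\<in>I. \<integral>x. (c i x)\<^sup>2 \<partial>M i)"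
    using I by (simp add: cross sum.delta)
  finally show "(\<integral>w. ((\<Sum>i\<in>I. g i (w i)) - (\<Sum>i\<in>I. m i))\<^sup>2 \<partial>PiM I M)
      = (\<Sum>i\<in>I. \<integral>x. (g i x - m i)\<^sup>2 \<partial>M i)"
    by (simp add: c_def)
qed

lemma (in prob_space) integral_indicator_centered_square:
  assumes "A \<in> events"
  shows "(\<integral>x. (indicator A x - prob A)\<^sup>2 \<partial>M) = prob A - (prob A)\<^sup>2"
proof -
  have "(indicator A x - prob A)\<^sup>2 = (1 - 2 * prob A) * indicator A x + (prob A)\<^sup>2" for x :: 'a
    by (simp add: indicator_def power2_eq_square algebra_simps)
  then have "(\<integral>x. (indicator A x - prob A)\<^sup>2 \<partial>M) = (1 - 2 * prob A) * prob A + (prob A)\<^sup>2"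
    using assms by (simp add: integrable_real_indicator emeasure_eq_measure prob_space)
  then show ?thesis
    by (simp add: power2_eq_square algebra_simps)
qed

lemma
  assumes M: "\<And>i. prob_space (M i)" and I: "finite I" and A: "\<And>i. i \<in> I \<Longrightarrow> A i \<in> sets (M i)"
  shows integral_PiM_sum_indicators:
      "(\<integral>w. (\<Sum>i\<in>I. indicator (A i) (w i)) \<partial>PiM I M) = (\<Sum>i\<in>I. measure (M i) (A i))"
    and variance_PiM_sum_indicators:
      "(\<integral>w. ((\<Sum>i\<in>I. indicator (A i) (w i)) - (\<Sum>i\<in>I. measure (M i) (A i)))\<^sup>2 \<partial>PiM I M)
        = (\<Sum>i\<in>I. measure (M i) (A i) - (measure (M i) (A i))\<^sup>2)"
proof -
  have integral_A: "integral\<^sup>L (M i) (indicator (A i)) = measure (M i) (A i)" if "i \<in> I" for i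
    using A[OF that] by (simp add: Int_absorb2 sets.sets_into_space)
  note sums = integral_PiM_sum_components[of M I "\<lambda>i. indicator (A i)" 1]
    variance_PiM_sum_components[of M I "\<lambda>i. indicator (A i)" 1]
  show "(\<integral>w. (\<Sum>i\<in>I. indicator (A i) (w i)) \<partial>PiM I M) = (\<Sum>i\<in>I. measure (M i) (A i))"
    using sums(1) M I A integral_A by simp
  show "(\<integral>w. ((\<Sum>i\<in>I. indicator (A i) (w i)) - (\<Sum>i\<in>I. measure (M i) (A i)))\<^sup>2 \<partial>PiM I M)
      = (\<Sum>i\<in>I. measure (M i) (A i) - (measure (M i) (A i))\<^sup>2)"
    using sums(2) M I A integral_A
    by (simp add: prob_space.integral_indicator_centered_square[OF M] cong: sum.cong)
qed

lemma erf_0 [simp]: "erf 0 = 0"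
  by (simp add: erf_def zero_ereal_def)

lemma has_real_derivative_erf: "(erf has_real_derivative (2 / sqrt pi * exp (- (x\<^sup>2)))) (at x)"
proof -
  define a where "a = min 0 x - 1"
  define b where "b = max 0 x + 1"
  have "continuous_on {a..b} (\<lambda>t::real. exp (- (t\<^sup>2)))"
    by (intro continuous_intros)
  then have "((\<lambda>u. LBINT t=ereal 0..u. exp (- (t\<^sup>2))) has_vector_derivative exp (- (x\<^sup>2))) (at x within {a..b})"
    by (rule interval_integral_FTC2[rotated 2]) (auto simp: a_def b_def)
  then have "((\<lambda>u. LBINT t=0..u. exp (- (t\<^sup>2))) has_vector_derivative exp (- (x\<^sup>2))) (at x within {a<..<b})"
    unfolding zero_ereal_def by (rule has_vector_derivative_within_subset) auto
  then have "((\<lambda>u. LBINT t=0..u. exp (- (t\<^sup>2))) has_vector_derivative exp (- (x\<^sup>2))) (at x)"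
    by (subst (asm) has_vector_derivative_within_open) (auto simp: a_def b_def)
  then have "((\<lambda>u. LBINT t=0..u. exp (- (t\<^sup>2))) has_real_derivative exp (- (x\<^sup>2))) (at x)"
    by (simp add: has_real_derivative_iff_has_vector_derivative)
  then show ?thesis
    unfolding erf_def[abs_def] by (intro derivative_eq_intros) auto
qed

lemma erf_minus [simp]: "erf (- x) = - erf x"
proof -
  have "((\<lambda>x. erf (- x) + erf x) has_real_derivative
      2 / sqrt pi * exp (- ((- y)\<^sup>2)) * (- 1) + 2 / sqrt pi * exp (- (y\<^sup>2))) (at y)" for y
    by (intro DERIV_add DERIV_chain2[OF has_real_derivative_erf] has_real_derivative_erf)
      (auto intro!: derivative_eq_intros)
  then have "((\<lambda>x. erf (- x) + erf x) has_real_derivative 0) (at y)" for y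
    by simp
  then show ?thesis
    using DERIV_isconst_all[of "\<lambda>x. erf (- x) + erf x" x 0] by simp
qed

lemma has_real_derivative_erf_normal:
  assumes "\<sigma> > 0"
  shows "((\<lambda>x. erf (x / (sqrt 2 * \<sigma>)) / 2) has_real_derivative normal_density 0 \<sigma> x) (at x)"
proof -
  have "((\<lambda>x. erf (x / (sqrt 2 * \<sigma>)) / 2) has_real_derivative
      2 / sqrt pi * exp (- ((x / (sqrt 2 * \<sigma>))\<^sup>2)) * (1 / (sqrt 2 * \<sigma>)) / 2) (at x)"
  proof -
    have "((\<lambda>x. erf (x / (sqrt 2 * \<sigma>))) has_real_derivative
        2 / sqrt pi * exp (- ((x / (sqrt 2 * \<sigma>))\<^sup>2)) * (1 / (sqrt 2 * \<sigma>))) (at x)"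
      by (rule DERIV_chain2[OF has_real_derivative_erf]) (use assms in \<open>auto intro!: derivative_eq_intros\<close>)
    then show ?thesis
      by (intro derivative_eq_intros) auto
  qed
  moreover have "2 / sqrt pi * exp (- ((x / (sqrt 2 * \<sigma>))\<^sup>2)) * (1 / (sqrt 2 * \<sigma>)) / 2
      = normal_density 0 \<sigma> x"
    using assms by (simp add: normal_density_def real_sqrt_mult power_divide power_mult_distrib field_simps)
  ultimately show ?thesis
    by simp
qed

lemma interval_integral_normal_density:
  assumes "\<sigma> > 0"
  shows "(LBINT x=l..u. normal_density 0 \<sigma> x) = erf (u / (sqrt 2 * \<sigma>)) / 2 - erf (l / (sqrt 2 * \<sigma>)) / 2"
proof (rule interval_integral_FTC_finite)
  show "continuous_on {min l u..max l u} (normal_density 0 \<sigma>)"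
    unfolding normal_density_def using assms by (intro continuous_intros) auto
  show "((\<lambda>x. erf (x / (sqrt 2 * \<sigma>)) / 2) has_vector_derivative normal_density 0 \<sigma> x)
      (at x within {min l u..max l u})" for x
    using has_real_derivative_erf_normal[OF assms, of x]
    by (simp add: has_real_derivative_iff_has_vector_derivative has_vector_derivative_at_within)
qed

lemma
  assumes "\<sigma> > 0" "l \<le> u"
  shows measure_normal_Ioc: "measure (density lborel (normal_density 0 \<sigma>)) {l<..u}
      = erf (u / (sqrt 2 * \<sigma>)) / 2 - erf (l / (sqrt 2 * \<sigma>)) / 2"
    and measure_normal_Ico: "measure (density lborel (normal_density 0 \<sigma>)) {l..<u}
      = erf (u / (sqrt 2 * \<sigma>)) / 2 - erf (l / (sqrt 2 * \<sigma>)) / 2"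
proof -
  have "measure (density lborel (normal_density 0 \<sigma>)) S = (LBINT x:S. normal_density 0 \<sigma> x)"
    if "S \<in> sets borel" for S
  proof -
    have "measure (density lborel (normal_density 0 \<sigma>)) S
        = (\<integral>x. indicator S x \<partial>density lborel (normal_density 0 \<sigma>))"
      using that by simp
    also have "\<dots> = (\<integral>x. normal_density 0 \<sigma> x *\<^sub>R indicator S x \<partial>lborel)"
      using that by (intro integral_density) auto
    finally show ?thesis
      by (simp add: set_lebesgue_integral_def mult.commute)
  qed
  then show "measure (density lborel (normal_density 0 \<sigma>)) {l<..u}
      = erf (u / (sqrt 2 * \<sigma>)) / 2 - erf (l / (sqrt 2 * \<sigma>)) / 2"
    and "measure (density lborel (normal_density 0 \<sigma>)) {l..<u}
      = erf (u / (sqrt 2 * \<sigma>)) / 2 - erf (l / (sqrt 2 * \<sigma>)) / 2"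
    using assms interval_integral_Ioc[of l u "normal_density 0 \<sigma>"]
      interval_integral_Ico[of l u "normal_density 0 \<sigma>"]
    by (simp_all add: interval_integral_normal_density)
qed

definition fd_window :: "real \<Rightarrow> real \<Rightarrow> real set" where
  "fd_window lam eps = {- lam - eps..<- lam} \<union> {lam - eps<..lam}"

lemma dST_lam_shift_diff:
  assumes "0 < eps" "eps < 2 * lam"
  shows "dST_lam (\<lambda>j. y j + eps * basis_vec i j) lam i - dST_lam y lam i
      = - indicator (fd_window lam eps) (y i)"
  using assms by (auto simp: dST_lam_def basis_vec_def fd_window_def indicator_def sgn_if abs_if)

lemma grad2_df_FD_eq_window_count:
  assumes "0 < eps" "eps < 2 * lam"
  shows "grad2_df_FD P y lam eps = - (1 / eps) * (\<Sum>i<P. indicator (fd_window lam eps) (y i))"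
  using assms by (simp add: grad2_df_FD_def dST_lam_shift_diff sum_negf)

lemma shifted_fd_window:
  "{x. a + x \<in> fd_window lam eps} = {- lam - eps - a..<- lam - a} \<union> {lam - eps - a<..lam - a}"
  by (auto simp: fd_window_def)

lemma measure_normal_shifted_fd_window:
  assumes "\<sigma> > 0" "0 < eps" "eps < 2 * lam"
  shows "measure (density lborel (normal_density 0 \<sigma>)) {x. a + x \<in> fd_window lam eps}
      = phi_fd \<sigma> a lam eps / 2"
proof -
  interpret prob_space "density lborel (normal_density 0 \<sigma>)"
    using assms(1) by (rule prob_space_normal_density)
  define s where "s = sqrt 2 * \<sigma>"
  have "measure (density lborel (normal_density 0 \<sigma>)) {x. a + x \<in> fd_window lam eps}
      = (erf ((- lam - a) / s) / 2 - erf ((- lam - eps - a) / s) / 2)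
        + (erf ((lam - a) / s) / 2 - erf ((lam - eps - a) / s) / 2)"
    unfolding shifted_fd_window s_def using assms
    by (subst finite_measure_Union) (auto simp: measure_normal_Ioc measure_normal_Ico)
  also have "\<dots> = phi_fd \<sigma> a lam eps / 2"
  proof -
    have "(- lam - a) / s = - ((a + lam) / s)" "(- lam - eps - a) / s = - ((a + lam + eps) / s)"
      "(lam - a) / s = - ((a - lam) / s)" "(lam - eps - a) / s = - ((a - lam + eps) / s)"
      by (simp_all add: minus_divide_left algebra_simps)
    then show ?thesis
      unfolding phi_fd_def s_def[symmetric] by simp
  qed
  finally show ?thesis .
qed

theorem lemma1:
  fixes P :: nat and \<sigma> lam eps :: real and \<mu>0 :: "nat \<Rightarrow> real"
  assumes "\<sigma> > 0" and "lam > 0" and "0 < eps" and "eps < 2 * lam"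
  defines "G \<equiv> (\<lambda>w. grad2_df_FD P (\<lambda>i. \<mu>0 i + w i) lam eps)"
  shows "(\<integral>w. G w \<partial>gauss_noise P \<sigma>) = - (1/2) * (\<Sum>i<P. phi_fd \<sigma> (\<mu>0 i) lam eps / eps)
    \<and> (\<integral>w. (G w - (\<integral>v. G v \<partial>gauss_noise P \<sigma>))\<^sup>2 \<partial>gauss_noise P \<sigma>)
           = 1 / (2 * eps) * (\<Sum>i<P. phi_fd \<sigma> (\<mu>0 i) lam eps / eps)
             - (1/4) * (\<Sum>i<P. (phi_fd \<sigma> (\<mu>0 i) lam eps / eps)\<^sup>2)"
proof -
  define N where "N = density lborel (normal_density 0 \<sigma>)"
  define A where "A i = {x. \<mu>0 i + x \<in> fd_window lam eps}" for i
  define p where "p i = phi_fd \<sigma> (\<mu>0 i) lam eps / 2" for i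
  have N: "prob_space N"
    unfolding N_def using assms(1) by (rule prob_space_normal_density)
  have A: "A i \<in> sets N" for i
    by (simp add: A_def N_def shifted_fd_window)
  have p: "measure N (A i) = p i" for i
    unfolding p_def A_def N_def using assms(1,3,4) by (rule measure_normal_shifted_fd_window)
  have noise: "gauss_noise P \<sigma> = PiM {..<P} (\<lambda>_. N)"
    by (simp add: gauss_noise_def N_def)
  have G: "G w = - (1 / eps) * (\<Sum>i<P. indicator (A i) (w i))" for w
    using assms by (simp add: G_def grad2_df_FD_eq_window_count A_def indicator_def)
  have mean: "(\<integral>w. G w \<partial>gauss_noise P \<sigma>) = - (1 / eps) * (\<Sum>i<P. p i)"
    using integral_PiM_sum_indicators[of "\<lambda>_. N" "{..<P}" A] N A by (simp add: noise G p)
  have "(G w - (\<integral>v. G v \<partial>gauss_noise P \<sigma>))\<^sup>2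
      = (1 / eps)\<^sup>2 * ((\<Sum>i<P. indicator (A i) (w i)) - (\<Sum>i<P. p i))\<^sup>2" for w
    unfolding mean by (simp add: G power2_eq_square algebra_simps)
  then have variance: "(\<integral>w. (G w - (\<integral>v. G v \<partial>gauss_noise P \<sigma>))\<^sup>2 \<partial>gauss_noise P \<sigma>)
      = (1 / eps)\<^sup>2 * (\<Sum>i<P. p i - (p i)\<^sup>2)"
    using variance_PiM_sum_indicators[of "\<lambda>_. N" "{..<P}" A] N A by (simp add: noise p)
  have "- (1 / eps) * (\<Sum>i<P. p i) = - (1/2) * (\<Sum>i<P. phi_fd \<sigma> (\<mu>0 i) lam eps / eps)"
    by (simp add: p_def sum_distrib_left mult.commute)
  moreover have "(1 / eps)\<^sup>2 * (\<Sum>i<P. p i - (p i)\<^sup>2)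
      = 1 / (2 * eps) * (\<Sum>i<P. phi_fd \<sigma> (\<mu>0 i) lam eps / eps)
        - (1/4) * (\<Sum>i<P. (phi_fd \<sigma> (\<mu>0 i) lam eps / eps)\<^sup>2)"
    by (simp add: p_def sum_distrib_left sum_subtractf power2_eq_square diff_divide_distrib
        sum_divide_distrib mult.assoc)
  ultimately show ?thesis
    using mean variance by simp
qed

end
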